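(* Let $\rho_{ABC}\in\mathcal{S}(\mathcal{H}_{ABC})$, $\tau_{AC}\in\mathcal{S}(\mathcal{H}_{AC})$, $\theta_{BC}\in\mathcal{S}(\mathcal{H}_{BC})$, $\omega_C\in\mathcal{S}(\mathcal{H}_C)$, and suppose $\operatorname{supp}(\rho_{ABC})\subseteq\operatorname{supp}(\tau_{AC})\cap\operatorname{supp}(\theta_{BC})\cap\operatorname{supp}(\omega_C)$. Then for every ordered triple $(X,Y,Z)$ that is a permutation of $(\tau_{AC},\omega_C,\theta_{BC})$, $$\lim_{\alpha\to1}\Delta_\alpha(\rho_{ABC};X,Y,Z)=\Delta(\rho_{ABC},\tau_{AC},\theta_{BC},\omega_C).$$ In particular, $\lim_{\alpha\to1}\Delta_\alpha(\rho_{ABC};\rho_{AC},\rho_C,\rho_{BC})=I(A;B|C)_\rho$.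
   Context: Finite-dimensional Hilbert spaces; natural log; functions of positive semidefinite operators by spectral calculus, with logarithms and negative powers taken on the support only ($A^0$ denotes the projection onto the support). Operators on subsystems are tensored with identities; subscripts denote marginals. $\Delta(\rho_{ABC},\tau_{AC},\theta_{BC},\omega_C)\equiv\operatorname{Tr}\{\rho_{ABC}[\log\rho_{ABC}-\log\tau_{AC}-\log\theta_{BC}+\log\omega_C]\}$; $I(A;B|C)_\rho=H(AC)+H(BC)-H(C)-H(ABC)$. Set $e(\tau_{AC})=e(\theta_{BC})=+1$, $e(\omega_C)=-1$. For an ordered triple $(X,Y,Z)$ that is a permutation of $(\tau_{AC},\omega_C,\theta_{BC})$ and $p\in\mathbb{R}$, let $K_p(X,Y,Z)=X^{pe_X/2}Y^{pe_Y/2}Z^{pe_Z}Y^{pe_Y/2}X^{pe_X/2}$, and define $\Delta_\alpha(\rho_{ABC};X,Y,Z)\equiv\frac{1}{\alpha-1}\log\operatorname{Tr}\{\rho_{ABC}^{\alpha}K_{1-\alpha}(X,Y,Z)\}$. For example $\Delta_\alpha(\rho;\tau,\omega,\theta)=\frac{1}{\alpha-1}\log\operatorname{Tr}\{\rho^\alpha\tau^{(1-\alpha)/2}\omega^{(\alpha-1)/2}\theta^{1-\alpha}\omega^{(\alpha-1)/2}\tau^{(1-\alpha)/2}\}$. *)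

theory Defs
  imports "HOL-Analysis.Analysis"
begin

text \<open>Operators on a finite-dimensional Hilbert space with orthonormal basis indexed
by the finite type 'n::finite are complex matrices of type complex^'n::finite^'n::finite.
H_ABC has basis index 'a * 'b * 'c, H_AC has 'a * 'c, H_BC has 'b * 'c, H_C has 'c.\<close>

definition cadj :: "complex^'n::finite^'m \<Rightarrow> complex^'m::finite^'n::finite" where
  "cadj A = (\<chi> i j. cnj (A $ j $ i))"

definition hermitian :: "complex^'n::finite^'n::finite \<Rightarrow> bool" where
  "hermitian A \<longleftrightarrow> cadj A = A"

definition unitary :: "complex^'n::finite^'n::finite \<Rightarrow> bool" where
  "unitary U \<longleftrightarrow> cadj U ** U = mat 1 \<and> U ** cadj U = mat 1"

definition qform :: "complex^'n::finite^'n::finite \<Rightarrow> complex^'n::finite \<Rightarrow> complex" where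
  "qform A v = (\<Sum>i\<in>UNIV. cnj (v $ i) * (A *v v) $ i)"

definition psd :: "complex^'n::finite^'n::finite \<Rightarrow> bool" where
  "psd A \<longleftrightarrow> hermitian A \<and> (\<forall>v. 0 \<le> Re (qform A v))"

definition mtrace :: "complex^'n::finite^'n::finite \<Rightarrow> complex" where
  "mtrace A = (\<Sum>i\<in>UNIV. A $ i $ i)"

definition density :: "complex^'n::finite^'n::finite \<Rightarrow> bool" where
  "density A \<longleftrightarrow> psd A \<and> mtrace A = 1"

definition supp :: "complex^'n::finite^'n::finite \<Rightarrow> (complex^'n::finite) set" where
  "supp A = range (\<lambda>v. A *v v)"

definition diagm :: "('n::finite \<Rightarrow> real) \<Rightarrow> complex^'n::finite^'n::finite" where
  "diagm d = (\<chi> i j. if i = j then complex_of_real (d i) else 0)"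

definition mfun :: "(real \<Rightarrow> real) \<Rightarrow> complex^'n::finite^'n::finite \<Rightarrow> complex^'n::finite^'n::finite" where
  "mfun f A = (SOME B. \<exists>U d. unitary U \<and> A = U ** diagm d ** cadj U
                              \<and> B = U ** diagm (f \<circ> d) ** cadj U)"

text \<open>powers and logarithm taken on the support only (so A^0 is the support projection)\<close>
definition mpow :: "real \<Rightarrow> complex^'n::finite^'n::finite \<Rightarrow> complex^'n::finite^'n::finite" where
  "mpow p A = mfun (\<lambda>x. if x > 0 then x powr p else 0) A"

definition mlog :: "complex^'n::finite^'n::finite \<Rightarrow> complex^'n::finite^'n::finite" where
  "mlog A = mfun (\<lambda>x. if x > 0 then ln x else 0) A"

text \<open>tensoring subsystem operators with identities\<close>
definition embAC :: "complex^('a::finite\<times>'c::finite)^('a::finite\<times>'c::finite) \<Rightarrow> complex^('a::finite\<times>'b::finite\<times>'c::finite)^('a::finite\<times>'b::finite\<times>'c::finite)" where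
  "embAC T = (\<chi> i j. if fst (snd i) = fst (snd j)
                       then T $ (fst i, snd (snd i)) $ (fst j, snd (snd j)) else 0)"

definition embBC :: "complex^('b::finite\<times>'c::finite)^('b::finite\<times>'c::finite) \<Rightarrow> complex^('a::finite\<times>'b::finite\<times>'c::finite)^('a::finite\<times>'b::finite\<times>'c::finite)" where
  "embBC T = (\<chi> i j. if fst i = fst j then T $ (snd i) $ (snd j) else 0)"

definition embC :: "complex^'c::finite^'c::finite \<Rightarrow> complex^('a::finite\<times>'b::finite\<times>'c::finite)^('a::finite\<times>'b::finite\<times>'c::finite)" where
  "embC T = (\<chi> i j. if fst i = fst j \<and> fst (snd i) = fst (snd j)
                      then T $ (snd (snd i)) $ (snd (snd j)) else 0)"

definition margAC :: "complex^('a::finite\<times>'b::finite\<times>'c::finite)^('a::finite\<times>'b::finite\<times>'c::finite) \<Rightarrow> complex^('a::finite\<times>'c::finite)^('a::finite\<times>'c::finite)" where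
  "margAC R = (\<chi> i j. \<Sum>b\<in>UNIV. R $ (fst i, b, snd i) $ (fst j, b, snd j))"

definition margBC :: "complex^('a::finite\<times>'b::finite\<times>'c::finite)^('a::finite\<times>'b::finite\<times>'c::finite) \<Rightarrow> complex^('b::finite\<times>'c::finite)^('b::finite\<times>'c::finite)" where
  "margBC R = (\<chi> i j. \<Sum>a\<in>UNIV. R $ (a, i) $ (a, j))"

definition margC :: "complex^('a::finite\<times>'b::finite\<times>'c::finite)^('a::finite\<times>'b::finite\<times>'c::finite) \<Rightarrow> complex^'c::finite^'c::finite" where
  "margC R = (\<chi> i j. \<Sum>a\<in>UNIV. \<Sum>b\<in>UNIV. R $ (a, b, i) $ (a, b, j))"

definition Delta ::
  "complex^('a::finite\<times>'b::finite\<times>'c::finite)^('a::finite\<times>'b::finite\<times>'c::finite) \<Rightarrow> complex^('a::finite\<times>'c::finite)^('a::finite\<times>'c::finite)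
   \<Rightarrow> complex^('b::finite\<times>'c::finite)^('b::finite\<times>'c::finite) \<Rightarrow> complex^'c::finite^'c::finite \<Rightarrow> real" where
  "Delta R T Th W = Re (mtrace (R ** (mlog R - embAC (mlog T) - embBC (mlog Th) + embC (mlog W))))"

definition entropy :: "complex^'n::finite^'n::finite \<Rightarrow> real" where
  "entropy A = - Re (mtrace (A ** mlog A))"

definition cmi :: "complex^('a::finite\<times>'b::finite\<times>'c::finite)^('a::finite\<times>'b::finite\<times>'c::finite) \<Rightarrow> real" where
  "cmi R = entropy (margAC R) + entropy (margBC R) - entropy (margC R) - entropy R"

text \<open>Factor p \<mapsto> (operator)^(p * e), embedded into H_ABC; e = +1 for tau, theta; e = -1 for omega.\<close>
definition tauF :: "complex^('a::finite\<times>'c::finite)^('a::finite\<times>'c::finite) \<Rightarrow> real \<Rightarrow> complex^('a::finite\<times>'b::finite\<times>'c::finite)^('a::finite\<times>'b::finite\<times>'c::finite)" where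
  "tauF T p = embAC (mpow p T)"

definition thetaF :: "complex^('b::finite\<times>'c::finite)^('b::finite\<times>'c::finite) \<Rightarrow> real \<Rightarrow> complex^('a::finite\<times>'b::finite\<times>'c::finite)^('a::finite\<times>'b::finite\<times>'c::finite)" where
  "thetaF T p = embBC (mpow p T)"

definition omegaF :: "complex^'c::finite^'c::finite \<Rightarrow> real \<Rightarrow> complex^('a::finite\<times>'b::finite\<times>'c::finite)^('a::finite\<times>'b::finite\<times>'c::finite)" where
  "omegaF W p = embC (mpow (- p) W)"

definition Kop :: "(real \<Rightarrow> complex^'n::finite^'n::finite) \<Rightarrow> (real \<Rightarrow> complex^'n::finite^'n::finite) \<Rightarrow> (real \<Rightarrow> complex^'n::finite^'n::finite)
                   \<Rightarrow> real \<Rightarrow> complex^'n::finite^'n::finite" where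
  "Kop X Y Z p = X (p/2) ** Y (p/2) ** Z p ** Y (p/2) ** X (p/2)"

definition DeltaAlpha :: "complex^'n::finite^'n::finite \<Rightarrow> (real \<Rightarrow> complex^'n::finite^'n::finite) \<Rightarrow> (real \<Rightarrow> complex^'n::finite^'n::finite)
                   \<Rightarrow> (real \<Rightarrow> complex^'n::finite^'n::finite) \<Rightarrow> real \<Rightarrow> real" where
  "DeltaAlpha R X Y Z \<alpha> = ln (Re (mtrace (mpow \<alpha> R ** Kop X Y Z (1 - \<alpha>)))) / (\<alpha> - 1)"

definition perm_triples :: "'x \<Rightarrow> 'x \<Rightarrow> 'x \<Rightarrow> ('x \<times> 'x \<times> 'x) set" where
  "perm_triples T W Th = {(T,W,Th), (T,Th,W), (W,T,Th), (W,Th,T), (Th,T,W), (Th,W,T)}"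

end

theory Submission
  imports Defs
begin

text \<open>Let f(\<alpha>) = Tr \<rho>^\<alpha> K_{1-\<alpha>}(X,Y,Z). At \<alpha> = 1 every factor of K_0 is a support
  projection, and the support hypothesis makes each of them act as the identity on \<rho>; hence
  f(1) = Tr \<rho> = 1 and \<Delta>_\<alpha> = (ln f(\<alpha>) - ln f(1)) / (\<alpha> - 1) tends to f'(1). Differentiating
  \<rho>^\<alpha> gives log \<rho> \<rho>, and differentiating K_p at p = 0 gives, after absorbing the
  projections into \<rho> again, the sum of the logarithms weighted by their signs e, independently
  of the order of the factors. So f'(1) = \<Delta>(\<rho>,\<tau>,\<theta>,\<omega>). For the marginals the support
  condition holds automatically, and Tr \<rho> (log \<rho>_AC \<otimes> 1) = Tr \<rho>_AC log \<rho>_AC turns \<Delta> into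
  the conditional mutual information.\<close>

section \<open>Complex inner product and the spectral theorem\<close>

definition cinner :: "complex^'n::finite \<Rightarrow> complex^'n \<Rightarrow> complex" where
  "cinner x y = (\<Sum>i\<in>UNIV. cnj (x$i) * y$i)"

lemma cinner_add_left: "cinner (x + y) z = cinner x z + cinner y z"
  by (simp add: cinner_def distrib_right sum.distrib)
lemma cinner_add_right: "cinner z (x + y) = cinner z x + cinner z y"
  by (simp add: cinner_def distrib_left sum.distrib)
lemma cinner_diff_right: "cinner z (x - y) = cinner z x - cinner z y"
  by (simp add: cinner_def right_diff_distrib sum_subtractf)
lemma cinner_smult_left: "cinner (c *s x) y = cnj c * cinner x y"
  by (simp add: cinner_def sum_distrib_left mult_ac)
lemma cinner_smult_right: "cinner x (c *s y) = c * cinner x y"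
  by (simp add: cinner_def sum_distrib_left mult_ac)
lemma cinner_scaleR_left: "cinner (t *\<^sub>R x) y = of_real t * cinner x y"
  by (simp add: cinner_def sum_distrib_left, simp add: scaleR_conv_of_real mult_ac)
lemma cinner_scaleR_right: "cinner x (t *\<^sub>R y) = of_real t * cinner x y"
  by (simp add: cinner_def sum_distrib_left, simp add: scaleR_conv_of_real mult_ac)
lemma cinner_commute: "cinner y x = cnj (cinner x y)"
  by (simp add: cinner_def mult.commute)
lemma cinner_sum_right: "cinner x (\<Sum>j\<in>S. f j) = (\<Sum>j\<in>S. cinner x (f j))"
  by (simp add: cinner_def sum_distrib_left) (rule sum.swap)

lemma cinner_self: "cinner x x = of_real ((norm x)^2)"
proof -
  have "cinner x x = (\<Sum>i\<in>UNIV. of_real ((norm (x$i))^2))"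
    unfolding cinner_def by (intro sum.cong refl) (metis complex_norm_square mult.commute)
  also have "\<dots> = of_real ((norm x)^2)"
    by (simp add: norm_vec_def L2_set_def sum_nonneg)
  finally show ?thesis .
qed

lemma continuous_on_cinner_right: "continuous_on UNIV (\<lambda>w. cinner s w)"
  unfolding cinner_def by (intro continuous_intros)

lemma cadj_component [simp]: "cadj A $ i $ j = cnj (A $ j $ i)"
  by (simp add: cadj_def)
lemma cadj_mult: "cadj (A ** B) = cadj B ** cadj A"
  by (simp add: vec_eq_iff matrix_matrix_mult_def mult.commute)

lemma cinner_cadj: "cinner x (A *v y) = cinner (cadj A *v x) y"
  unfolding cinner_def matrix_vector_mult_def
  by (simp add: sum_distrib_left sum_distrib_right mult_ac, subst sum.swap, simp)

lemma cinner_hermitian: "hermitian A \<Longrightarrow> cinner x (A *v y) = cinner (A *v x) y"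
  by (metis cinner_cadj hermitian_def)

lemma qform_cinner: "qform A v = cinner v (A *v v)"
  by (simp add: qform_def cinner_def)

lemma matrix_vector_mult_scaleR_complex:
  "(A::complex^'n::finite^'m::finite) *v (t *\<^sub>R x) = t *\<^sub>R (A *v x)"
  by (simp add: vec_eq_iff matrix_vector_mult_def scaleR_sum_right)

lemma scaleR_vec_conv_smult: "t *\<^sub>R (x::complex^'n) = complex_of_real t *s x"
  by (simp add: vec_eq_iff) (simp add: scaleR_conv_of_real)

lemma cinner_expand_along_line:
  "cinner (x + t *\<^sub>R y) (A *v (x + t *\<^sub>R y)) = cinner x (A *v x) + of_real t * cinner x (A *v y)
     + of_real t * cinner y (A *v x) + of_real t * of_real t * cinner y (A *v y)"
  by (simp add: matrix_vector_mult_scaleR_complex cinner_add_left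
      cinner_add_right cinner_scaleR_left cinner_scaleR_right algebra_simps)

lemma of_real_Re_if_cnj_eq: "cnj c = c \<Longrightarrow> complex_of_real (Re c) = c"
  by (simp add: complex_eq_iff)

lemma quadratic_nonneg_imp_linear_coeff_0:
  fixes a b :: real
  assumes a: "a \<ge> 0" and H: "\<And>t. 0 \<le> 2 * t * a + t^2 * b"
  shows "a = 0"
proof (rule ccontr)
  assume "a \<noteq> 0"
  with a have apos: "a > 0" by simp
  define s where "s = 1 / (\<bar>b\<bar> + 1)"
  have spos: "s > 0" by (simp add: s_def)
  have "0 \<le> 2 * (- s * a) * a + (- s * a)^2 * b" by (rule H)
  also have "\<dots> = (s * a * a) * (s * b - 2)" by (simp add: power2_eq_square algebra_simps)
  finally have "0 \<le> (s * a * a) * (s * b - 2)" .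
  moreover have "s * a * a > 0" using spos apos by simp
  ultimately have "0 \<le> s * b - 2" by (simp add: zero_le_mult_iff)
  moreover have "s * b \<le> s * \<bar>b\<bar>" using spos by (simp add: mult_left_mono)
  moreover have "s * \<bar>b\<bar> < 1" by (simp add: s_def)
  ultimately show False by simp
qed

text \<open>If the Rayleigh quotient restricted to an A-invariant subspace W is maximal at v,
  then v is an eigenvector: moving along the line v + t y, with y the component of A v
  orthogonal to v, changes the quotient to first order by 2 t |y|^2.\<close>
lemma hermitian_rayleigh_max_eigenvector:
  fixes A :: "complex^'n::finite^'n"
  assumes herm: "hermitian A"
    and W_add: "\<And>x y. x \<in> W \<Longrightarrow> y \<in> W \<Longrightarrow> x + y \<in> W"
    and W_smult: "\<And>c x. x \<in> W \<Longrightarrow> c *s x \<in> W"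
    and W_inv: "\<And>x. x \<in> W \<Longrightarrow> A *v x \<in> W"
    and v: "v \<in> W" "cinner v v = 1"
    and max: "\<And>w. w \<in> W \<Longrightarrow> Re (cinner w (A *v w)) \<le> Re (cinner v (A *v v)) * (norm w)^2"
  shows "A *v v = of_real (Re (cinner v (A *v v))) *s v"
proof -
  define c where "c = cinner v (A *v v)"
  define y where "y = A *v v - c *s v"
  have "y = A *v v + (- c) *s v" by (simp add: y_def vec_eq_iff)
  then have yW: "y \<in> W" by (simp only:) (intro W_add W_inv W_smult v(1))
  have vy: "cinner v y = 0"
    by (simp add: y_def cinner_diff_right cinner_smult_right v(2) c_def)
  then have yv: "cinner y v = 0" by (simp add: cinner_commute[of v y])
  define n where "n = (norm y)^2"
  have yy: "cinner y y = of_real n" by (simp add: n_def cinner_self)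
  have "A *v v = y + c *s v" by (simp add: y_def)
  then have yAv: "cinner y (A *v v) = of_real n"
    by (simp add: cinner_add_right cinner_smult_right yv yy)
  have "cinner v (A *v y) = cinner (A *v v) y" by (rule cinner_hermitian[OF herm])
  also have "\<dots> = cnj (cinner y (A *v v))" by (rule cinner_commute)
  finally have vAy: "cinner v (A *v y) = of_real n" by (simp add: yAv)
  have "0 \<le> 2 * s * n + s^2 * (Re c * n - Re (cinner y (A *v y)))" for s
  proof -
    define w where "w = v + (- s) *\<^sub>R y"
    have "w \<in> W" unfolding w_def scaleR_vec_conv_smult by (intro W_add W_smult v(1) yW)
    then have "Re (cinner w (A *v w)) \<le> Re c * (norm w)^2" unfolding c_def by (rule max)
    moreover have "Re (cinner w (A *v w)) = Re c - 2 * s * n + s^2 * Re (cinner y (A *v y))"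
      unfolding w_def cinner_expand_along_line by (simp add: c_def vAy yAv power2_eq_square)
    moreover have "cinner w w = of_real (1 + s^2 * n)"
      using cinner_expand_along_line[of v "- s" y "mat 1"]
      by (simp add: w_def v(2) vy yv yy power2_eq_square)
    then have "(norm w)^2 = 1 + s^2 * n" by (simp only: cinner_self of_real_eq_iff)
    ultimately have "Re c - 2 * s * n + s^2 * Re (cinner y (A *v y)) \<le> Re c * (1 + s^2 * n)"
      by (simp only:)
    then show ?thesis by (simp add: right_diff_distrib distrib_left mult.left_commute)
  qed
  from quadratic_nonneg_imp_linear_coeff_0[OF _ this] have "y = 0" by (simp add: n_def)
  then have Av: "A *v v = c *s v" by (simp add: y_def)
  have "cnj c = c"
    unfolding c_def cinner_commute[of "A *v v" v, symmetric] by (rule cinner_hermitian[OF herm, symmetric])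
  then have "of_real (Re c) = c" by (rule of_real_Re_if_cnj_eq)
  then show ?thesis unfolding c_def[symmetric] using Av by simp
qed

lemma compact_orthogonal_unit_vectors:
  "compact ({w. \<forall>s\<in>S. cinner s w = 0} \<inter> {v::complex^'n::finite. norm v = 1})"
proof -
  have "closed {w. cinner s w = 0}" for s :: "complex^'n"
    by (rule closed_Collect_eq[OF continuous_on_cinner_right continuous_on_const])
  moreover have "{w. \<forall>s\<in>S. cinner s w = 0} = (\<Inter>s\<in>S. {w. cinner s w = 0})" by auto
  ultimately have "closed {w::complex^'n. \<forall>s\<in>S. cinner s w = 0}" by auto
  moreover have "closed {v::complex^'n. norm v = 1}"
    by (rule closed_Collect_eq) (intro continuous_intros)+
  moreover have "bounded {v::complex^'n. norm v = 1}" unfolding bounded_iff by auto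
  ultimately show ?thesis by (simp add: compact_eq_bounded_closed closed_Int bounded_Int)
qed

lemma hermitian_eigenvector_orthogonal:
  fixes A :: "complex^'n::finite^'n"
  assumes herm: "hermitian A"
    and eig: "\<And>s. s \<in> S \<Longrightarrow> \<exists>c. A *v s = c *s s"
    and w0: "w0 \<noteq> 0" "\<And>s. s \<in> S \<Longrightarrow> cinner s w0 = 0"
  shows "\<exists>v r. (\<forall>s\<in>S. cinner s v = 0) \<and> cinner v v = 1 \<and> A *v v = of_real r *s v"
proof -
  define W where "W = {w. \<forall>s\<in>S. cinner s w = 0}"
  have W_add: "x + y \<in> W" if "x \<in> W" "y \<in> W" for x y
    using that by (simp add: W_def cinner_add_right)
  have W_smult: "c *s x \<in> W" if "x \<in> W" for x c
    using that by (simp add: W_def cinner_smult_right)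
  have W_inv: "A *v w \<in> W" if "w \<in> W" for w
  proof -
    have "cinner s (A *v w) = 0" if s: "s \<in> S" for s
    proof -
      obtain c where "A *v s = c *s s" using eig s by blast
      then show ?thesis
        using \<open>w \<in> W\<close> s by (simp add: cinner_hermitian[OF herm] cinner_smult_left W_def)
    qed
    then show ?thesis by (simp add: W_def)
  qed
  define f where "f v = Re (cinner v (A *v v))" for v
  define K where "K = W \<inter> {v. norm v = 1}"
  have "compact K" unfolding K_def W_def by (rule compact_orthogonal_unit_vectors)
  moreover have "(1 / norm w0) *\<^sub>R w0 \<in> W"
    unfolding scaleR_vec_conv_smult using w0 by (intro W_smult) (simp add: W_def)
  then have "(1 / norm w0) *\<^sub>R w0 \<in> K" using w0 by (simp add: K_def)
  moreover have "continuous_on K f"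
    unfolding f_def cinner_def matrix_vector_mult_def by (intro continuous_intros)
  ultimately obtain v where vK: "v \<in> K" and vmax: "\<And>y. y \<in> K \<Longrightarrow> f y \<le> f v"
    using continuous_attains_sup[of K f] by blast
  have vW: "v \<in> W" and vv: "cinner v v = 1" using vK by (simp_all add: K_def cinner_self)
  have "f w \<le> f v * (norm w)^2" if "w \<in> W" for w
  proof (cases "w = 0")
    case False
    have "(1 / norm w) *\<^sub>R w \<in> W" unfolding scaleR_vec_conv_smult by (rule W_smult[OF that])
    then have "(1 / norm w) *\<^sub>R w \<in> K" using False by (simp add: K_def)
    then have "f ((1 / norm w) *\<^sub>R w) \<le> f v" by (rule vmax)
    then have "(1 / norm w)^2 * f w \<le> f v"
      by (simp add: f_def matrix_vector_mult_scaleR_complex cinner_scaleR_left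
          cinner_scaleR_right power2_eq_square)
    then show ?thesis using False by (simp add: field_simps)
  qed (simp add: f_def cinner_def)
  then have "A *v v = of_real (f v) *s v"
    unfolding f_def using hermitian_rayleigh_max_eigenvector[OF herm W_add W_smult W_inv vW vv] by blast
  then show ?thesis using vW vv by (auto simp: W_def)
qed

text \<open>Otherwise the u j would form an orthonormal basis, and summing |u j $ i|^2 over i and j
  would give CARD('n) = k.\<close>
lemma exists_orthogonal_to_orthonormal:
  fixes u :: "nat \<Rightarrow> complex^'n::finite"
  assumes orth: "\<forall>i<k. \<forall>j<k. cinner (u i) (u j) = (if i = j then 1 else 0)"
    and k: "k < CARD('n)"
  shows "\<exists>w. w \<noteq> 0 \<and> (\<forall>j<k. cinner (u j) w = 0)"
proof (rule ccontr)
  assume no_orth: "\<not> ?thesis"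
  have expansion: "x = (\<Sum>j<k. cinner (u j) x *s u j)" for x
  proof -
    define r where "r = x - (\<Sum>j<k. cinner (u j) x *s u j)"
    have "cinner (u i) r = 0" if i: "i < k" for i
    proof -
      have "cinner (u i) (\<Sum>j<k. cinner (u j) x *s u j) = (\<Sum>j<k. cinner (u j) x * cinner (u i) (u j))"
        by (simp add: cinner_sum_right cinner_smult_right)
      also have "\<dots> = (\<Sum>j<k. if j = i then cinner (u j) x else 0)"
        using orth i by (intro sum.cong refl) auto
      also have "\<dots> = cinner (u i) x" using i by simp
      finally show ?thesis by (simp add: r_def cinner_diff_right)
    qed
    with no_orth have "r = 0" by blast
    then show ?thesis by (simp add: r_def)
  qed
  have "(\<Sum>j<k. cnj (u j $ i) * u j $ i) = 1" for i
  proof -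
    have "cinner (u j) (axis i 1) = cnj (u j $ i)" for j
      by (simp add: cinner_def axis_def if_distrib cong: if_cong)
    then show ?thesis using arg_cong[OF expansion[of "axis i 1"], of "\<lambda>x. x $ i"] by simp
  qed
  then have "of_nat CARD('n) = (\<Sum>i\<in>UNIV. \<Sum>j<k. cnj (u j $ i) * u j $ i)" by simp
  also have "\<dots> = (\<Sum>j<k. cinner (u j) (u j))" unfolding cinner_def by (rule sum.swap)
  also have "\<dots> = of_nat k" using orth by simp
  finally show False using k by simp
qed

lemma hermitian_orthonormal_eigenvectors:
  fixes A :: "complex^'n::finite^'n"
  assumes herm: "hermitian A"
  shows "k \<le> CARD('n) \<Longrightarrow> \<exists>u r. (\<forall>i<k. \<forall>j<k. cinner (u i) (u j) = (if i = j then 1 else 0))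
                \<and> (\<forall>j<k. A *v u j = of_real (r j) *s u j)"
proof (induct k)
  case 0 then show ?case by simp
next
  case (Suc k)
  then obtain u r where orth: "\<forall>i<k. \<forall>j<k. cinner (u i) (u j) = (if i = j then 1 else 0)"
    and eig: "\<forall>j<k. A *v u j = of_real (r j) *s u j" by auto
  obtain w0 where "w0 \<noteq> 0" "\<forall>j<k. cinner (u j) w0 = 0"
    using exists_orthogonal_to_orthonormal[OF orth] Suc.prems by auto
  then obtain v lam where vu: "\<forall>j<k. cinner (u j) v = 0" and vv: "cinner v v = 1"
    and Av: "A *v v = of_real lam *s v"
    using hermitian_eigenvector_orthogonal[OF herm, of "u ` {..<k}" w0] eig by blast
  have "\<forall>j<k. cinner v (u j) = 0" using vu cinner_commute[of v] by simp
  then have "\<forall>i<Suc k. \<forall>j<Suc k. cinner ((u(k := v)) i) ((u(k := v)) j) = (if i = j then 1 else 0)"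
    using orth vv vu by (auto simp: less_Suc_eq)
  moreover have "\<forall>j<Suc k. A *v (u(k := v)) j = of_real ((r(k := lam)) j) *s (u(k := v)) j"
    using eig Av by (auto simp: less_Suc_eq)
  ultimately show ?case by blast
qed

section \<open>Spectral decompositions and the spectral calculus\<close>

definition udiag :: "complex^'n::finite^'n \<Rightarrow> ('n \<Rightarrow> real) \<Rightarrow> complex^'n^'n" where
  "udiag U f = U ** diagm f ** cadj U"

lemma mult_diagm_component: "(M ** diagm g) $ i $ j = M $ i $ j * of_real (g j)"
  by (simp add: matrix_matrix_mult_def diagm_def if_distrib if_distribR cong: if_cong)
lemma diagm_mult_component: "(diagm g ** M) $ i $ j = of_real (g i) * M $ i $ j"
  by (simp add: matrix_matrix_mult_def diagm_def if_distrib if_distribR cong: if_cong)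

lemma diagm_mult: "diagm f ** diagm g = diagm (\<lambda>k. f k * g k)"
  by (simp add: vec_eq_iff mult_diagm_component) (simp add: diagm_def)

lemma hermitian_udiag_exists:
  fixes A :: "complex^'n::finite^'n"
  assumes herm: "hermitian A"
  shows "\<exists>U d. unitary U \<and> A = udiag U d"
proof -
  obtain u r where orth: "\<forall>i<CARD('n). \<forall>j<CARD('n). cinner (u i) (u j) = (if i = j then 1 else 0)"
    and eig: "\<forall>j<CARD('n). A *v u j = of_real (r j) *s u j"
    using hermitian_orthonormal_eigenvectors[OF herm, of "CARD('n)"] by auto
  obtain g where g: "bij_betw g (UNIV::'n set) {0..<CARD('n)}"
    using ex_bij_betw_finite_nat[of "UNIV::'n set"] by auto
  have g_less: "g j < CARD('n)" for j using g by (auto simp: bij_betw_def)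
  have g_eq: "g j = g l \<longleftrightarrow> j = l" for j l using g by (auto simp: bij_betw_def inj_on_def)
  define U :: "complex^'n^'n" where "U = (\<chi> i j. u (g j) $ i)"
  define d where "d j = r (g j)" for j
  have "cadj U ** U = mat 1"
    by (simp add: vec_eq_iff matrix_matrix_mult_def U_def mat_def flip: cinner_def)
       (simp add: orth g_less g_eq)
  moreover from this have "U ** cadj U = mat 1"
    using matrix_left_right_inverse by blast
  moreover have "A ** U = U ** diagm d"
  proof -
    have "(A ** U) $ i $ l = (A *v u (g l)) $ i" for i l
      by (simp add: matrix_matrix_mult_def matrix_vector_mult_def U_def)
    then show ?thesis
      using eig g_less by (simp add: vec_eq_iff mult_diagm_component U_def d_def mult.commute)
  qed
  then have "A ** (U ** cadj U) = udiag U d" by (simp add: matrix_mul_assoc udiag_def)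
  ultimately show ?thesis unfolding unitary_def by auto
qed

lemma udiag_mult: "unitary U \<Longrightarrow> udiag U f ** udiag U g = udiag U (\<lambda>k. f k * g k)"
proof -
  assume "unitary U"
  then have "udiag U f ** udiag U g = U ** diagm f ** (cadj U ** U) ** diagm g ** cadj U"
    by (simp add: udiag_def matrix_mul_assoc)
  with \<open>unitary U\<close> show ?thesis
    by (simp add: unitary_def udiag_def diagm_mult matrix_mul_assoc[symmetric])
qed

lemma udiag_component: "udiag U f $ i $ j = (\<Sum>k\<in>UNIV. U $ i $ k * of_real (f k) * cnj (U $ j $ k))"
  by (simp add: udiag_def matrix_matrix_mult_def diagm_def if_distrib if_distribR cong: if_cong)

lemma cadj_udiag: "cadj (udiag U f) = udiag U f"
  by (simp add: vec_eq_iff udiag_component mult_ac)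

lemma hermitian_udiag: "hermitian (udiag U f)"
  by (simp add: hermitian_def cadj_udiag)

lemma udiag_eq_sum: "udiag U f = (\<Sum>k\<in>UNIV. f k *\<^sub>R udiag U (\<lambda>l. if l = k then 1 else 0))"
proof -
  have "(\<Sum>k\<in>UNIV. f k *\<^sub>R udiag U (\<lambda>l. if l = k then 1 else 0)) $ i $ j
      = (\<Sum>k\<in>UNIV. f k *\<^sub>R (U $ i $ k * cnj (U $ j $ k)))" for i j
    by (simp add: udiag_component if_distrib if_distribR cong: if_cong)
  then show ?thesis by (simp add: vec_eq_iff udiag_component scaleR_conv_of_real mult_ac)
qed

lemma udiag_has_vector_derivative:
  assumes "\<And>k. ((\<lambda>p. \<phi> k p) has_real_derivative \<phi>' k) (at p)"
  shows "((\<lambda>p. udiag U (\<lambda>k. \<phi> k p)) has_vector_derivative udiag U \<phi>') (at p)"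
  by (subst (1 2) udiag_eq_sum)
     (intro has_vector_derivative_sum, use has_vector_derivative_scaleR[OF assms has_vector_derivative_const] in simp)

text \<open>The spectral calculus does not depend on the chosen decomposition: a matrix W
  intertwining diag d and diag e only connects indices with equal eigenvalues,
  so it also intertwines diag (f \<circ> d) and diag (f \<circ> e).\<close>
lemma mfun_udiag:
  assumes u: "unitary U" and A: "A = udiag U d"
  shows "mfun f A = udiag U (f \<circ> d)"
proof -
  have "\<exists>V e. unitary V \<and> A = V ** diagm e ** cadj V \<and> mfun f A = V ** diagm (f \<circ> e) ** cadj V"
    unfolding mfun_def by (rule someI_ex) (use u A in \<open>auto simp: udiag_def\<close>)
  then obtain V e where v: "unitary V" and AV: "A = udiag V e" and mf: "mfun f A = udiag V (f \<circ> e)"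
    unfolding udiag_def by blast
  define W where "W = cadj V ** U"
  have "cadj V ** A ** U = W ** diagm d"
    using u by (simp add: A udiag_def W_def matrix_mul_assoc[symmetric] unitary_def)
  moreover have "cadj V ** A ** U = (cadj V ** V) ** diagm e ** (cadj V ** U)"
    by (simp add: AV udiag_def matrix_mul_assoc)
  ultimately have WD: "W ** diagm d = diagm e ** W" using v by (simp add: W_def unitary_def)
  have "W $ i $ j * of_real (f (d j)) = of_real (f (e i)) * W $ i $ j" for i j
  proof (cases "W $ i $ j = 0")
    case False
    have "W $ i $ j * of_real (d j) = of_real (e i) * W $ i $ j"
      using arg_cong[OF WD, of "\<lambda>M. M $ i $ j"] by (simp add: mult_diagm_component diagm_mult_component)
    with False have "d j = e i" by (simp add: mult.commute)
    then show ?thesis by (simp add: mult.commute)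
  qed simp
  then have WF: "W ** diagm (f \<circ> d) = diagm (f \<circ> e) ** W"
    by (simp add: vec_eq_iff mult_diagm_component diagm_mult_component)
  have "udiag U (f \<circ> d) = (V ** cadj V) ** U ** diagm (f \<circ> d) ** cadj U"
    using v by (simp add: udiag_def unitary_def)
  also have "\<dots> = V ** (W ** diagm (f \<circ> d)) ** cadj U"
    by (simp add: W_def matrix_mul_assoc)
  also have "\<dots> = V ** (diagm (f \<circ> e) ** W) ** cadj U"
    by (simp only: WF)
  also have "\<dots> = V ** diagm (f \<circ> e) ** (cadj V ** (U ** cadj U))"
    by (simp add: W_def matrix_mul_assoc)
  also have "\<dots> = mfun f A" using u by (simp add: mf udiag_def unitary_def)
  finally show ?thesis ..
qed

definition supp_powr :: "real \<Rightarrow> real \<Rightarrow> real" where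
  "supp_powr p x = (if x > 0 then x powr p else 0)"

definition supp_ln :: "real \<Rightarrow> real" where
  "supp_ln x = (if x > 0 then ln x else 0)"

lemma mpow_udiag: "unitary U \<Longrightarrow> A = udiag U d \<Longrightarrow> mpow p A = udiag U (\<lambda>k. supp_powr p (d k))"
  unfolding mpow_def by (simp add: mfun_udiag o_def supp_powr_def)

lemma mlog_udiag: "unitary U \<Longrightarrow> A = udiag U d \<Longrightarrow> mlog A = udiag U (\<lambda>k. supp_ln (d k))"
  unfolding mlog_def by (simp add: mfun_udiag o_def supp_ln_def)

lemma supp_powr_has_derivative:
  "((\<lambda>p. supp_powr p x) has_real_derivative supp_ln x * supp_powr p x) (at p)"
proof (cases "x > 0")
  case True
  have "((\<lambda>p. exp (p * ln x)) has_real_derivative exp (p * ln x) * ln x) (at p)"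
    by (auto intro!: derivative_eq_intros)
  with True show ?thesis by (simp add: supp_powr_def supp_ln_def powr_def mult.commute)
qed (simp add: supp_powr_def supp_ln_def)

definition nonneg_spectrum :: "complex^'n::finite^'n \<Rightarrow> bool" where
  "nonneg_spectrum A \<longleftrightarrow> (\<exists>U d. unitary U \<and> A = udiag U d \<and> (\<forall>k. d k \<ge> 0))"

lemma nonneg_spectrum_hermitian: "nonneg_spectrum A \<Longrightarrow> hermitian A"
  unfolding nonneg_spectrum_def using hermitian_udiag by blast

lemma hermitian_mpow: "hermitian A \<Longrightarrow> hermitian (mpow p A)"
  by (metis hermitian_udiag_exists mpow_udiag hermitian_udiag)

lemma mpow_0_idem:
  assumes "hermitian A"
  shows "mpow 0 A ** mpow 0 A = mpow 0 A"
proof -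
  obtain U d where u: "unitary U" and A: "A = udiag U d"
    using hermitian_udiag_exists[OF assms] by blast
  have "(\<lambda>k. supp_powr 0 (d k) * supp_powr 0 (d k)) = (\<lambda>k. supp_powr 0 (d k))"
    by (simp add: fun_eq_iff supp_powr_def)
  then show ?thesis unfolding mpow_udiag[OF u A] udiag_mult[OF u] by (simp only:)
qed

lemma mpow_has_vector_derivative:
  assumes "hermitian A"
  shows "((\<lambda>p. mpow p A) has_vector_derivative mlog A ** mpow p A) (at p)"
proof -
  obtain U d where u: "unitary U" and A: "A = udiag U d"
    using hermitian_udiag_exists[OF assms] by blast
  have "((\<lambda>p. udiag U (\<lambda>k. supp_powr p (d k))) has_vector_derivative
      udiag U (\<lambda>k. supp_ln (d k) * supp_powr p (d k))) (at p)"
    by (rule udiag_has_vector_derivative) (rule supp_powr_has_derivative)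
  then show ?thesis by (simp add: mpow_udiag[OF u A] mlog_udiag[OF u A] udiag_mult[OF u])
qed

lemma mlog_mult_mpow_0:
  assumes "hermitian A"
  shows "mlog A ** mpow 0 A = mlog A"
proof -
  obtain U d where u: "unitary U" and A: "A = udiag U d"
    using hermitian_udiag_exists[OF assms] by blast
  have "(\<lambda>k. supp_ln (d k) * supp_powr 0 (d k)) = (\<lambda>k. supp_ln (d k))"
    by (simp add: fun_eq_iff supp_ln_def supp_powr_def)
  then show ?thesis unfolding mpow_udiag[OF u A] mlog_udiag[OF u A] udiag_mult[OF u] by (simp only:)
qed

lemma mpow_1:
  assumes "nonneg_spectrum A"
  shows "mpow 1 A = A"
proof -
  obtain U d where u: "unitary U" and A: "A = udiag U d" and d: "\<And>k. d k \<ge> 0"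
    using assms unfolding nonneg_spectrum_def by blast
  have "(\<lambda>k. supp_powr 1 (d k)) = d" using d by (auto simp: fun_eq_iff supp_powr_def less_eq_real_def)
  then show ?thesis unfolding mpow_udiag[OF u A] by (simp add: A)
qed

definition absorbs :: "complex^'n::finite^'n \<Rightarrow> complex^'n^'n \<Rightarrow> bool" where
  "absorbs R P \<longleftrightarrow> P ** R = R \<and> R ** P = R"

lemma absorbs_mpow_0:
  assumes "nonneg_spectrum A"
  shows "absorbs A (mpow 0 A)"
proof -
  obtain U d where u: "unitary U" and A: "A = udiag U d" and d: "\<And>k. d k \<ge> 0"
    using assms unfolding nonneg_spectrum_def by blast
  have "(\<lambda>k. supp_powr 0 (d k) * d k) = d" "(\<lambda>k. d k * supp_powr 0 (d k)) = d"
    using d by (auto simp: fun_eq_iff supp_powr_def less_eq_real_def)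
  then show ?thesis
    unfolding absorbs_def mpow_udiag[OF u A] by (simp only: A udiag_mult[OF u])
qed

section \<open>Differentiating the sandwiched trace\<close>

lemma mtrace_eq_trace: "mtrace A = trace A"
  by (simp add: mtrace_def trace_def)

lemma mtrace_add: "mtrace (A + B) = mtrace A + mtrace B"
  by (simp add: mtrace_eq_trace trace_add)
lemma mtrace_diff: "mtrace (A - B) = mtrace A - mtrace B"
  by (simp add: mtrace_eq_trace trace_sub)
lemma mtrace_uminus: "mtrace (- A) = - mtrace A"
  by (simp add: mtrace_def sum_negf)
lemma mtrace_scaleR: "mtrace (c *\<^sub>R A) = c *\<^sub>R mtrace A"
  by (simp add: mtrace_def scaleR_sum_right)
lemma mtrace_mult_commute: "mtrace ((A::complex^'n::finite^'m::finite) ** B) = mtrace (B ** A)"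
  unfolding mtrace_eq_trace by (rule trace_mul_sym)

lemma matrix_add_rdistrib: "((A::'a::semiring_1^'n::finite^'m::finite) + B) ** C = A ** C + B ** C"
  by (simp add: vec_eq_iff matrix_matrix_mult_def distrib_right sum.distrib)
lemma matrix_diff_ldistrib: "(A::'a::ring_1^'n::finite^'m::finite) ** (B - C) = A ** B - A ** C"
  by (simp add: vec_eq_iff matrix_matrix_mult_def right_diff_distrib sum_subtractf)
lemma matrix_diff_rdistrib: "((A::'a::ring_1^'n::finite^'m::finite) - B) ** C = A ** C - B ** C"
  by (simp add: vec_eq_iff matrix_matrix_mult_def left_diff_distrib sum_subtractf)
lemma matrix_uminus_right: "(A::'a::ring_1^'n::finite^'m::finite) ** (- B) = - (A ** B)"
  by (simp add: vec_eq_iff matrix_matrix_mult_def sum_negf)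

lemma matrix_scaleR_left: "(c *\<^sub>R (A::complex^'n::finite^'m::finite)) ** (B::complex^'p::finite^'n) = c *\<^sub>R (A ** B)"
  by (simp add: scalar_matrix_assoc)
lemma matrix_scaleR_right: "(A::complex^'n::finite^'m::finite) ** (c *\<^sub>R (B::complex^'p::finite^'n)) = c *\<^sub>R (A ** B)"
  by (simp add: matrix_scalar_ac scalar_matrix_assoc)

lemma bounded_linear_Re_mtrace: "bounded_linear (\<lambda>M::complex^'n::finite^'n. Re (mtrace M))"
  unfolding linear_conv_bounded_linear[symmetric]
  by (rule linearI) (simp_all add: mtrace_add mtrace_scaleR)

lemma bounded_bilinear_matrix_mult: "bounded_bilinear (\<lambda>(A::complex^'n::finite^'m::finite) (B::complex^'p::finite^'n). A ** B)"
  unfolding bilinear_conv_bounded_bilinear[symmetric] bilinear_def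
  by (auto intro!: linearI simp: matrix_add_ldistrib matrix_add_rdistrib scalar_matrix_assoc matrix_scalar_ac)

lemma has_vector_derivative_matrix_mult:
  fixes f :: "real \<Rightarrow> complex^'n::finite^'m::finite" and g :: "real \<Rightarrow> complex^'p::finite^'n"
  assumes "(f has_vector_derivative f') (at x)" "(g has_vector_derivative g') (at x)"
  shows "((\<lambda>x. f x ** g x) has_vector_derivative (f x ** g' + f' ** g x)) (at x)"
  using bounded_bilinear.has_vector_derivative[OF bounded_bilinear_matrix_mult assms] by simp

lemma has_vector_derivative_affine_comp:
  fixes X :: "real \<Rightarrow> 'a::real_normed_vector"
  assumes "(X has_vector_derivative L) (at (a * x + b))"
  shows "((\<lambda>p. X (a * p + b)) has_vector_derivative a *\<^sub>R L) (at x)"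
proof -
  have "((\<lambda>p. a * p + b) has_vector_derivative a) (at x)"
    unfolding has_real_derivative_iff_has_vector_derivative[symmetric]
    by (auto intro!: derivative_eq_intros)
  from vector_diff_chain_at[OF this assms] show ?thesis by (simp add: o_def)
qed

lemma absorbs_mult: "absorbs R P \<Longrightarrow> absorbs R Q \<Longrightarrow> absorbs R (P ** Q)"
  unfolding absorbs_def by (simp add: matrix_mul_assoc[symmetric]) (simp add: matrix_mul_assoc)

lemma mtrace_absorbs_left: "absorbs R P \<Longrightarrow> mtrace (R ** (P ** M)) = mtrace (R ** M)"
  unfolding absorbs_def by (simp add: matrix_mul_assoc)

lemma mtrace_absorbs_right:
  assumes "absorbs R P"
  shows "mtrace (R ** (M ** P)) = mtrace (R ** M)"
proof -
  have "mtrace (R ** (M ** P)) = mtrace ((R ** M) ** P)" by (simp add: matrix_mul_assoc)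
  also have "\<dots> = mtrace (P ** (R ** M))" by (rule mtrace_mult_commute)
  also have "\<dots> = mtrace (R ** M)" using assms by (simp add: absorbs_def matrix_mul_assoc)
  finally show ?thesis .
qed

text \<open>Each of the two outer factors X(p/2) contributes half of Tr R L_X, and likewise for Y;
  the support projections X 0, Y 0, Z 0 drop out of every term because they act as the
  identity on R.\<close>
lemma Kop_has_vector_derivative:
  assumes X: "(X has_vector_derivative LX) (at 0)" "absorbs R (X 0)"
    and Y: "(Y has_vector_derivative LY) (at 0)" "absorbs R (Y 0)"
    and Z: "(Z has_vector_derivative LZ) (at 0)" "absorbs R (Z 0)"
  obtains K' where "(Kop X Y Z has_vector_derivative K') (at 0)"
    and "mtrace (R ** K') = mtrace (R ** LX) + mtrace (R ** LY) + mtrace (R ** LZ)"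
proof
  have X2: "((\<lambda>p. X (p/2)) has_vector_derivative (1/2) *\<^sub>R LX) (at 0)"
    using has_vector_derivative_affine_comp[of X LX "1/2" 0 0] X(1) by (simp add: mult.commute)
  have Y2: "((\<lambda>p. Y (p/2)) has_vector_derivative (1/2) *\<^sub>R LY) (at 0)"
    using has_vector_derivative_affine_comp[of Y LY "1/2" 0 0] Y(1) by (simp add: mult.commute)
  define X0 Y0 Z0 where "X0 = X 0" and "Y0 = Y 0" and "Z0 = Z 0"
  define K' where "K' = X0 ** Y0 ** Z0 ** Y0 ** ((1/2) *\<^sub>R LX) +
     (X0 ** Y0 ** Z0 ** ((1/2) *\<^sub>R LY) +
      (X0 ** Y0 ** LZ + (X0 ** ((1/2) *\<^sub>R LY) + (1/2) *\<^sub>R LX ** Y0) ** Z0) ** Y0) ** X0"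
  show "(Kop X Y Z has_vector_derivative K') (at 0)"
    using has_vector_derivative_matrix_mult[OF has_vector_derivative_matrix_mult[OF
        has_vector_derivative_matrix_mult[OF has_vector_derivative_matrix_mult[OF X2 Y2] Z(1)] Y2] X2]
    by (simp only: Kop_def[abs_def] K'_def X0_def Y0_def Z0_def div_0)
  have absorbs: "absorbs R X0" "absorbs R Y0" "absorbs R Z0"
    using X(2) Y(2) Z(2) by (simp_all add: X0_def Y0_def Z0_def)
  have "mtrace (R ** K') = (1/2) *\<^sub>R mtrace (R ** LX) + ((1/2) *\<^sub>R mtrace (R ** LY) +
        (mtrace (R ** LZ) + ((1/2) *\<^sub>R mtrace (R ** LY) + (1/2) *\<^sub>R mtrace (R ** LX))))"
    unfolding K'_def
    by (simp add: matrix_mul_assoc[symmetric] matrix_add_ldistrib matrix_add_rdistrib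
        matrix_scaleR_left matrix_scaleR_right mtrace_add mtrace_scaleR
        mtrace_absorbs_left mtrace_absorbs_right absorbs absorbs_mult)
  then show "mtrace (R ** K') = mtrace (R ** LX) + mtrace (R ** LY) + mtrace (R ** LZ)"
    by (simp add: scaleR_conv_of_real algebra_simps)
qed

lemma ln_quotient_tendsto:
  assumes H: "(H has_real_derivative D) (at 1)" and H1: "H 1 = 1"
  shows "((\<lambda>x. ln (H x) / (x - 1)) \<longlongrightarrow> D) (at 1)"
proof -
  have "((\<lambda>x. ln (H x)) has_real_derivative inverse (H 1) * D) (at 1)"
    by (rule DERIV_chain2[OF DERIV_ln H]) (simp add: H1)
  then show ?thesis using H1 by (simp add: has_field_derivative_iff)
qed

section \<open>Subsystem embeddings and partial traces\<close>

lemma mult_if_0: "a * (if P then b else 0) = (if P then a * b else (0::'a::mult_zero))"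
  by simp

lemma sum_UNIV_prod: "(\<Sum>k\<in>(UNIV::('x::finite\<times>'y::finite) set). f k) = (\<Sum>a\<in>UNIV. \<Sum>b\<in>UNIV. f (a, b))"
proof -
  have "(\<Sum>k\<in>(UNIV::('x\<times>'y) set). f k) = (\<Sum>k\<in>(UNIV::'x set) \<times> (UNIV::'y set). f k)" by simp
  also have "\<dots> = (\<Sum>(a,b)\<in>(UNIV::'x set) \<times> (UNIV::'y set). f (a, b))" by (simp add: case_prod_beta')
  also have "\<dots> = (\<Sum>a\<in>UNIV. \<Sum>b\<in>UNIV. f (a, b))" by (rule sum.cartesian_product[symmetric])
  finally show ?thesis .
qed

lemma sum_if_const_cond: "(\<Sum>x\<in>S. if P then f x else 0) = (if P then \<Sum>x\<in>S. f x else 0)"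
  by simp

lemma sum_delta_eq2: "(\<Sum>b\<in>(UNIV::'b::finite set). if i = b \<and> b = j then g b else 0) = (if i = j then g i else 0)"
proof (cases "i = j")
  case True
  then have "(\<Sum>b\<in>(UNIV::'b set). if i = b \<and> b = j then g b else 0) = (\<Sum>b\<in>UNIV. if i = b then g b else 0)"
    by (intro sum.cong) auto
  then show ?thesis using True by simp
qed (auto intro!: sum.neutral)

lemma if_mult_if: "(if P then a else 0) * (if Q then b else 0) = (if P \<and> Q then a * b else (0::'a::mult_zero))"
  by simp

lemma embAC_component [simp]: "embAC A $ (ia, ib, ic) $ (ja, jb, jc) = (if ib = jb then A $ (ia, ic) $ (ja, jc) else 0)"
  by (simp add: embAC_def)
lemma embBC_component [simp]: "embBC A $ (ia, ib, ic) $ (ja, jb, jc) = (if ia = ja then A $ (ib, ic) $ (jb, jc) else 0)"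
  by (simp add: embBC_def)
lemma embC_component [simp]: "embC A $ (ia, ib, ic) $ (ja, jb, jc) = (if ia = ja \<and> ib = jb then A $ ic $ jc else 0)"
  by (simp add: embC_def)

lemma vec_eq_triple: "(\<And>ia ib ic ja jb jc. M $ (ia, ib, ic) $ (ja, jb, jc) = N $ (ia, ib, ic) $ (ja, jb, jc)) \<Longrightarrow> M = N"
  by (simp add: vec_eq_iff)

lemma embAC_mult: "embAC A ** embAC B = (embAC (A ** B) :: complex^('a::finite\<times>'b::finite\<times>'c::finite)^('a\<times>'b\<times>'c))"
proof (rule vec_eq_triple)
  fix ia ib ic ja jb jc
  have "(embAC A ** embAC B :: complex^('a\<times>'b\<times>'c)^('a\<times>'b\<times>'c)) $ (ia, ib, ic) $ (ja, jb, jc)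
     = (\<Sum>a\<in>UNIV. \<Sum>b\<in>(UNIV::'b set). \<Sum>c\<in>UNIV. (if ib = b \<and> b = jb then A $ (ia, ic) $ (a, c) * B $ (a, c) $ (ja, jc) else 0))"
    by (simp add: matrix_matrix_mult_def sum_UNIV_prod if_mult_if)
  also have "\<dots> = (\<Sum>b\<in>(UNIV::'b set). \<Sum>a\<in>UNIV. \<Sum>c\<in>UNIV. (if ib = b \<and> b = jb then A $ (ia, ic) $ (a, c) * B $ (a, c) $ (ja, jc) else 0))"
    by (rule sum.swap)
  also have "\<dots> = (if ib = jb then (\<Sum>a\<in>UNIV. \<Sum>c\<in>UNIV. A $ (ia, ic) $ (a, c) * B $ (a, c) $ (ja, jc)) else 0)"
    by (simp only: sum_if_const_cond sum_delta_eq2)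
  also have "\<dots> = embAC (A ** B) $ (ia, ib, ic) $ (ja, jb, jc)"
    by (simp add: matrix_matrix_mult_def sum_UNIV_prod)
  finally show "(embAC A ** embAC B :: complex^('a\<times>'b\<times>'c)^('a\<times>'b\<times>'c)) $ (ia, ib, ic) $ (ja, jb, jc) = embAC (A ** B) $ (ia, ib, ic) $ (ja, jb, jc)" .
qed

lemma embBC_mult: "embBC A ** embBC B = (embBC (A ** B) :: complex^('a::finite\<times>'b::finite\<times>'c::finite)^('a\<times>'b\<times>'c))"
proof (rule vec_eq_triple)
  fix ia ib ic ja jb jc
  have "(embBC A ** embBC B :: complex^('a\<times>'b\<times>'c)^('a\<times>'b\<times>'c)) $ (ia, ib, ic) $ (ja, jb, jc)
     = (\<Sum>a\<in>(UNIV::'a set). \<Sum>b\<in>UNIV. \<Sum>c\<in>UNIV. (if ia = a \<and> a = ja then A $ (ib, ic) $ (b, c) * B $ (b, c) $ (jb, jc) else 0))"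
    by (simp add: matrix_matrix_mult_def sum_UNIV_prod if_mult_if)
  also have "\<dots> = (if ia = ja then (\<Sum>b\<in>UNIV. \<Sum>c\<in>UNIV. A $ (ib, ic) $ (b, c) * B $ (b, c) $ (jb, jc)) else 0)"
    by (simp only: sum_if_const_cond sum_delta_eq2)
  also have "\<dots> = embBC (A ** B) $ (ia, ib, ic) $ (ja, jb, jc)"
    by (simp add: matrix_matrix_mult_def sum_UNIV_prod)
  finally show "(embBC A ** embBC B :: complex^('a\<times>'b\<times>'c)^('a\<times>'b\<times>'c)) $ (ia, ib, ic) $ (ja, jb, jc) = embBC (A ** B) $ (ia, ib, ic) $ (ja, jb, jc)" .
qed

lemma embC_mult: "embC A ** embC B = (embC (A ** B) :: complex^('a::finite\<times>'b::finite\<times>'c::finite)^('a\<times>'b\<times>'c))"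
proof (rule vec_eq_triple)
  fix ia ib ic ja jb jc
  have "(embC A ** embC B :: complex^('a\<times>'b\<times>'c)^('a\<times>'b\<times>'c)) $ (ia, ib, ic) $ (ja, jb, jc)
     = (\<Sum>a\<in>(UNIV::'a set). \<Sum>b\<in>(UNIV::'b set). if ia = a \<and> a = ja then (if ib = b \<and> b = jb then (\<Sum>c\<in>UNIV. A $ ic $ c * B $ c $ jc) else 0) else 0)"
    by (auto simp: matrix_matrix_mult_def sum_UNIV_prod intro!: sum.cong)
  also have "\<dots> = (if ia = ja then (if ib = jb then (\<Sum>c\<in>UNIV. A $ ic $ c * B $ c $ jc) else 0) else 0)"
    by (simp only: sum_if_const_cond sum_delta_eq2)
  also have "\<dots> = embC (A ** B) $ (ia, ib, ic) $ (ja, jb, jc)"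
    by (simp add: matrix_matrix_mult_def)
  finally show "(embC A ** embC B :: complex^('a\<times>'b\<times>'c)^('a\<times>'b\<times>'c)) $ (ia, ib, ic) $ (ja, jb, jc) = embC (A ** B) $ (ia, ib, ic) $ (ja, jb, jc)" .
qed

lemma cadj_emb:
  "cadj (embAC A) = (embAC (cadj A) :: complex^('a::finite\<times>'b::finite\<times>'c::finite)^('a\<times>'b\<times>'c))"
  "cadj (embBC B) = (embBC (cadj B) :: complex^('a::finite\<times>'b::finite\<times>'c::finite)^('a\<times>'b\<times>'c))"
  "cadj (embC C) = (embC (cadj C) :: complex^('a::finite\<times>'b::finite\<times>'c::finite)^('a\<times>'b\<times>'c))"
  by (auto intro!: vec_eq_triple)

lemma emb_add:
  "embAC (A + A') = (embAC A + embAC A' :: complex^('a::finite\<times>'b::finite\<times>'c::finite)^('a\<times>'b\<times>'c))"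
  "embBC (B + B') = (embBC B + embBC B' :: complex^('a::finite\<times>'b::finite\<times>'c::finite)^('a\<times>'b\<times>'c))"
  "embC (C + C') = (embC C + embC C' :: complex^('a::finite\<times>'b::finite\<times>'c::finite)^('a\<times>'b\<times>'c))"
  by (auto intro!: vec_eq_triple)

lemma emb_scaleR:
  "embAC (r *\<^sub>R A) = (r *\<^sub>R embAC A :: complex^('a::finite\<times>'b::finite\<times>'c::finite)^('a\<times>'b\<times>'c))"
  "embBC (r *\<^sub>R B) = (r *\<^sub>R embBC B :: complex^('a::finite\<times>'b::finite\<times>'c::finite)^('a\<times>'b\<times>'c))"
  "embC (r *\<^sub>R C) = (r *\<^sub>R embC C :: complex^('a::finite\<times>'b::finite\<times>'c::finite)^('a\<times>'b\<times>'c))"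
  by (auto intro!: vec_eq_triple)

lemma emb_diff:
  "embAC (A - A') = (embAC A - embAC A' :: complex^('a::finite\<times>'b::finite\<times>'c::finite)^('a\<times>'b\<times>'c))"
  "embBC (B - B') = (embBC B - embBC B' :: complex^('a::finite\<times>'b::finite\<times>'c::finite)^('a\<times>'b\<times>'c))"
  "embC (C - C') = (embC C - embC C' :: complex^('a::finite\<times>'b::finite\<times>'c::finite)^('a\<times>'b\<times>'c))"
  by (auto intro!: vec_eq_triple)

lemma emb_mat_1:
  "embAC (mat 1) = (mat 1 :: complex^('a::finite\<times>'b::finite\<times>'c::finite)^('a\<times>'b\<times>'c))"
  "embBC (mat 1) = (mat 1 :: complex^('a::finite\<times>'b::finite\<times>'c::finite)^('a\<times>'b\<times>'c))"
  "embC (mat 1) = (mat 1 :: complex^('a::finite\<times>'b::finite\<times>'c::finite)^('a\<times>'b\<times>'c))"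
  by (auto intro!: vec_eq_triple simp: mat_def)

lemma bounded_linear_emb:
  "bounded_linear (embAC :: _ \<Rightarrow> complex^('a::finite\<times>'b::finite\<times>'c::finite)^('a\<times>'b\<times>'c))"
  "bounded_linear (embBC :: _ \<Rightarrow> complex^('a::finite\<times>'b::finite\<times>'c::finite)^('a\<times>'b\<times>'c))"
  "bounded_linear (embC :: _ \<Rightarrow> complex^('a::finite\<times>'b::finite\<times>'c::finite)^('a\<times>'b\<times>'c))"
  by (simp_all add: linear_conv_bounded_linear[symmetric] linearI emb_add emb_scaleR)

lemma marg_component [simp]:
  "margAC R $ (ia, ic) $ (ja, jc) = (\<Sum>b\<in>UNIV. R $ (ia, b, ic) $ (ja, b, jc))"
  "margBC R $ (ib, ic) $ (jb, jc) = (\<Sum>a\<in>UNIV. R $ (a, ib, ic) $ (a, jb, jc))"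
  "margC R $ ic $ jc = (\<Sum>a\<in>UNIV. \<Sum>b\<in>UNIV. R $ (a, b, ic) $ (a, b, jc))"
  by (simp_all add: margAC_def margBC_def margC_def)

lemma hermitian_marg:
  assumes "hermitian R"
  shows "hermitian (margAC R)" "hermitian (margBC R)" "hermitian (margC R)"
proof -
  have R: "cnj (R $ j $ i) = R $ i $ j" for i j
    using assms unfolding hermitian_def by (metis cadj_component)
  show "hermitian (margAC R)" unfolding hermitian_def
    by (simp add: vec_eq_iff split_paired_All cnj_sum R)
  show "hermitian (margBC R)" unfolding hermitian_def
    by (simp add: vec_eq_iff split_paired_All cnj_sum R)
  show "hermitian (margC R)" unfolding hermitian_def
    by (simp add: vec_eq_iff cnj_sum R)
qed

lemma mtrace_mult_embAC: "mtrace (R ** embAC M) = mtrace (margAC R ** M)"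
proof -
  have L: "mtrace (R ** embAC M) = (\<Sum>ia\<in>UNIV. \<Sum>ib\<in>UNIV. \<Sum>ic\<in>UNIV. \<Sum>a\<in>UNIV. \<Sum>c\<in>UNIV.
            R $ (ia, ib, ic) $ (a, ib, c) * M $ (a, c) $ (ia, ic))"
    by (simp add: mtrace_def matrix_matrix_mult_def sum_UNIV_prod mult_if_0 sum_if_const_cond)
  have Rt: "mtrace (margAC R ** M) = (\<Sum>ia\<in>UNIV. \<Sum>ic\<in>UNIV. \<Sum>a\<in>UNIV. \<Sum>c\<in>UNIV. \<Sum>ib\<in>UNIV.
            R $ (ia, ib, ic) $ (a, ib, c) * M $ (a, c) $ (ia, ic))"
    by (simp add: mtrace_def matrix_matrix_mult_def sum_UNIV_prod sum_distrib_right)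
  show ?thesis unfolding L Rt
    apply (rule sum.cong[OF refl])
    apply (rule trans[OF sum.swap])
    apply (rule sum.cong[OF refl])
    apply (rule trans[OF sum.swap])
    apply (rule sum.cong[OF refl])
    apply (rule sum.swap)
    done
qed

lemma if_conj_else_0: "(if P \<and> Q then x else 0) = (if P then (if Q then x else 0) else 0)"
  by simp

lemma mtrace_mult_embBC: "mtrace (R ** embBC M) = mtrace (margBC R ** M)"
proof -
  have L: "mtrace (R ** embBC M) = (\<Sum>ia\<in>UNIV. \<Sum>ib\<in>UNIV. \<Sum>ic\<in>UNIV. \<Sum>b\<in>UNIV. \<Sum>c\<in>UNIV.
            R $ (ia, ib, ic) $ (ia, b, c) * M $ (b, c) $ (ib, ic))"
    by (simp add: mtrace_def matrix_matrix_mult_def sum_UNIV_prod mult_if_0 sum_if_const_cond)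
  have Rt: "mtrace (margBC R ** M) = (\<Sum>ib\<in>UNIV. \<Sum>ic\<in>UNIV. \<Sum>b\<in>UNIV. \<Sum>c\<in>UNIV. \<Sum>ia\<in>UNIV.
            R $ (ia, ib, ic) $ (ia, b, c) * M $ (b, c) $ (ib, ic))"
    by (simp add: mtrace_def matrix_matrix_mult_def sum_UNIV_prod sum_distrib_right)
  show ?thesis unfolding L Rt
    apply (rule trans[OF sum.swap])
    apply (rule sum.cong[OF refl])
    apply (rule trans[OF sum.swap])
    apply (rule sum.cong[OF refl])
    apply (rule trans[OF sum.swap])
    apply (rule sum.cong[OF refl])
    apply (rule sum.swap)
    done
qed

lemma mtrace_mult_embC: "mtrace (R ** embC M) = mtrace (margC R ** M)"
proof -
  have "mtrace (R ** embC M) = (\<Sum>ia\<in>UNIV. \<Sum>ib\<in>UNIV. \<Sum>ic\<in>UNIV. \<Sum>c\<in>UNIV.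
            R $ (ia, ib, ic) $ (ia, ib, c) * M $ c $ ic)"
    by (simp add: mtrace_def matrix_matrix_mult_def sum_UNIV_prod mult_if_0 if_conj_else_0 sum_if_const_cond)
  also have "\<dots> = (\<Sum>ia\<in>UNIV. \<Sum>ic\<in>UNIV. \<Sum>ib\<in>UNIV. \<Sum>c\<in>UNIV.
            R $ (ia, ib, ic) $ (ia, ib, c) * M $ c $ ic)"
    by (rule sum.cong[OF refl], rule sum.swap)
  also have "\<dots> = (\<Sum>ic\<in>UNIV. \<Sum>ia\<in>UNIV. \<Sum>ib\<in>UNIV. \<Sum>c\<in>UNIV.
            R $ (ia, ib, ic) $ (ia, ib, c) * M $ c $ ic)"
    by (rule sum.swap)
  also have "\<dots> = (\<Sum>ic\<in>UNIV. \<Sum>ia\<in>UNIV. \<Sum>c\<in>UNIV. \<Sum>ib\<in>UNIV.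
            R $ (ia, ib, ic) $ (ia, ib, c) * M $ c $ ic)"
    by (rule sum.cong[OF refl], rule sum.cong[OF refl], rule sum.swap)
  also have "\<dots> = (\<Sum>ic\<in>UNIV. \<Sum>c\<in>UNIV. \<Sum>ia\<in>UNIV. \<Sum>ib\<in>UNIV.
            R $ (ia, ib, ic) $ (ia, ib, c) * M $ c $ ic)"
    by (rule sum.cong[OF refl], rule sum.swap)
  also have "\<dots> = mtrace (margC R ** M)"
    by (simp add: mtrace_def matrix_matrix_mult_def sum_distrib_right)
  finally show ?thesis .
qed

section \<open>Support projections\<close>

lemma psd_qform_eq_0_imp:
  assumes p: "psd R" and z: "Re (qform R x) = 0"
  shows "R *v x = 0"
proof -
  have herm: "hermitian R" using p by (simp add: psd_def)
  define y where "y = R *v x"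
  define n where "n = (norm y)^2"
  have yy: "cinner y y = of_real n" by (simp add: n_def cinner_self)
  have xy: "cinner x (R *v y) = of_real n"
    by (simp add: cinner_hermitian[OF herm] y_def[symmetric] yy)
  have yx: "cinner y (R *v x) = of_real n" by (simp add: y_def[symmetric] yy)
  have "0 \<le> 2 * t * n + t^2 * Re (qform R y)" for t
  proof -
    have "0 \<le> Re (qform R (x + t *\<^sub>R y))" using p by (simp add: psd_def)
    also have "\<dots> = Re (qform R x) + 2 * t * n + t^2 * Re (qform R y)"
      unfolding qform_cinner cinner_expand_along_line by (simp add: xy yx power2_eq_square)
    finally show ?thesis using z by simp
  qed
  from quadratic_nonneg_imp_linear_coeff_0[OF _ this] have "n = 0" by (simp add: n_def)
  then show ?thesis by (simp add: n_def y_def)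
qed

text \<open>For a projection Q, Tr(R Q) = Tr(Q R Q).\<close>
lemma mtrace_mult_projection:
  assumes hQ: "hermitian Q" and QQ: "Q ** Q = Q"
  shows "mtrace (R ** Q) = (\<Sum>i\<in>UNIV. qform R (column i Q))"
proof -
  have Qc: "cnj (Q $ j $ i) = Q $ i $ j" for i j
    using hQ unfolding hermitian_def by (metis cadj_component)
  have "mtrace (R ** Q) = mtrace ((R ** Q) ** Q)" by (simp add: matrix_mul_assoc[symmetric] QQ)
  also have "\<dots> = mtrace (Q ** (R ** Q))" by (rule mtrace_mult_commute)
  also have "\<dots> = (\<Sum>i\<in>UNIV. qform R (column i Q))"
    unfolding mtrace_def qform_def column_def
    by (simp add: matrix_matrix_mult_def matrix_vector_mult_def Qc)
  finally show ?thesis .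
qed

lemma psd_mtrace_mult_projection_nonneg:
  assumes "psd R" and "hermitian Q" and "Q ** Q = Q"
  shows "Re (mtrace (R ** Q)) \<ge> 0"
  using assms by (simp add: mtrace_mult_projection psd_def sum_nonneg)

lemma psd_mtrace_mult_projection_eq_0:
  assumes p: "psd R" and hQ: "hermitian Q" and QQ: "Q ** Q = Q"
    and z: "Re (mtrace (R ** Q)) = 0"
  shows "R ** Q = 0"
proof -
  have "(\<Sum>i\<in>UNIV. Re (qform R (column i Q))) = 0"
    using z by (simp add: mtrace_mult_projection[OF hQ QQ])
  moreover have "\<forall>i\<in>UNIV. 0 \<le> Re (qform R (column i Q))" using p by (simp add: psd_def)
  ultimately have "Re (qform R (column i Q)) = 0" for i
    using sum_nonneg_eq_0_iff[of UNIV "\<lambda>i. Re (qform R (column i Q))"] by simp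
  then have "R *v column i Q = 0" for i using psd_qform_eq_0_imp[OF p] by blast
  then show ?thesis
    by (simp add: vec_eq_iff matrix_matrix_mult_def matrix_vector_mult_def column_def)
qed

lemma absorbs_if_left:
  assumes hR: "hermitian R" and hQ: "hermitian Q" and QR: "Q ** R = R"
  shows "absorbs R Q"
proof -
  have "R ** Q = cadj (Q ** R)"
    using hR hQ by (simp add: cadj_mult hermitian_def)
  then show ?thesis using QR hR by (simp add: absorbs_def hermitian_def)
qed

lemma absorbs_if_supp_subset:
  assumes hR: "hermitian R" and hQ: "hermitian Q" and QM: "Q ** M = M" and sup: "supp R \<subseteq> supp M"
  shows "absorbs R Q"
proof (rule absorbs_if_left[OF hR hQ])
  have "(Q ** R) *v v = R *v v" for v
  proof -
    obtain w where w: "R *v v = M *v w" using sup by (auto simp: supp_def)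
    then show ?thesis by (simp add: matrix_vector_mul_assoc[symmetric] matrix_vector_mul_assoc QM)
  qed
  then show "Q ** R = R" by (simp add: matrix_eq)
qed

lemma absorbs_if_mtrace_complement:
  assumes p: "psd R" and hP: "hermitian P" and PP: "P ** P = P"
    and z: "Re (mtrace (R ** (mat 1 - P))) = 0"
  shows "absorbs R P"
proof (rule absorbs_if_left)
  have "hermitian (mat 1 - P)" using hP by (simp add: hermitian_def vec_eq_iff mat_def)
  moreover have "(mat 1 - P) ** (mat 1 - P) = mat 1 - P"
    by (simp add: matrix_diff_ldistrib matrix_diff_rdistrib PP)
  ultimately have "R ** (mat 1 - P) = 0" by (rule psd_mtrace_mult_projection_eq_0[OF p _ _ z])
  then have "R ** P = R" by (simp add: matrix_diff_ldistrib)
  moreover have "P ** R = cadj (R ** P)" using p hP by (simp add: cadj_mult hermitian_def psd_def)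
  ultimately show "P ** R = R" using p by (simp add: hermitian_def psd_def)
qed (use p hP in \<open>simp_all add: psd_def\<close>)

lemma mtrace_udiag:
  assumes "unitary U"
  shows "mtrace (udiag U f) = of_real (\<Sum>k\<in>UNIV. f k)"
proof -
  have "mtrace (udiag U f) = mtrace (cadj U ** (U ** diagm f))"
    unfolding udiag_def by (rule mtrace_mult_commute)
  also have "\<dots> = mtrace (diagm f)" using assms by (simp add: matrix_mul_assoc unitary_def)
  finally show ?thesis by (simp add: mtrace_def diagm_def)
qed

text \<open>Every eigenvalue of T is Tr(R E(P)) for a rank-one spectral projection P of T,
  and E(P) is again an orthogonal projection.\<close>
lemma nonneg_spectrum_if_mtrace_dual:
  fixes E :: "complex^'m::finite^'m \<Rightarrow> complex^'n::finite^'n"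
  assumes p: "psd R" and hT: "hermitian T"
    and tr: "\<And>M. mtrace (R ** E M) = mtrace (T ** M)"
    and Em: "\<And>A B. E A ** E B = E (A ** B)" and Ec: "\<And>A. cadj (E A) = E (cadj A)"
  shows "nonneg_spectrum T"
proof -
  obtain U d where u: "unitary U" and T: "T = udiag U d"
    using hermitian_udiag_exists[OF hT] by blast
  have "d k \<ge> 0" for k
  proof -
    define \<delta> where "\<delta> l = (if l = k then 1 else (0::real))" for l
    define Q where "Q = E (udiag U \<delta>)"
    have "hermitian Q" by (simp add: Q_def hermitian_def Ec cadj_udiag)
    moreover have "(\<lambda>l. \<delta> l * \<delta> l) = \<delta>" by (auto simp: \<delta>_def fun_eq_iff)
    then have "Q ** Q = Q" by (simp add: Q_def Em udiag_mult[OF u])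
    moreover have "mtrace (R ** Q) = of_real (d k)"
      by (simp add: Q_def tr T udiag_mult[OF u] mtrace_udiag[OF u] \<delta>_def mult_if_0)
    ultimately show ?thesis using psd_mtrace_mult_projection_nonneg[OF p] by fastforce
  qed
  then show ?thesis unfolding nonneg_spectrum_def using u T by blast
qed

lemma psd_imp_nonneg_spectrum: "psd A \<Longrightarrow> nonneg_spectrum A"
  using nonneg_spectrum_if_mtrace_dual[of A A id] by (simp add: psd_def)

lemma absorbs_mpow_0_if_supp_subset:
  fixes E :: "complex^'m::finite^'m \<Rightarrow> complex^'n::finite^'n"
  assumes hR: "hermitian R" and T: "nonneg_spectrum T"
    and Em: "\<And>A B. E A ** E B = E (A ** B)" and Ec: "\<And>A. cadj (E A) = E (cadj A)"
    and sup: "supp R \<subseteq> supp (E T)"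
  shows "absorbs R (E (mpow 0 T))"
proof (rule absorbs_if_supp_subset[OF hR _ _ sup])
  show "hermitian (E (mpow 0 T))"
    using hermitian_mpow[OF nonneg_spectrum_hermitian[OF T]] by (simp add: hermitian_def Ec)
  have "mpow 0 T ** T = T" using absorbs_mpow_0[OF T] by (simp add: absorbs_def)
  then show "E (mpow 0 T) ** E T = E T" by (simp add: Em)
qed

lemma absorbs_mpow_0_if_mtrace_dual:
  fixes E :: "complex^'m::finite^'m \<Rightarrow> complex^'n::finite^'n"
  assumes p: "psd R" and T: "nonneg_spectrum T"
    and tr: "\<And>M. mtrace (R ** E M) = mtrace (T ** M)"
    and Em: "\<And>A B. E A ** E B = E (A ** B)" and Ec: "\<And>A. cadj (E A) = E (cadj A)"
    and E1: "E (mat 1) = mat 1" and Ed: "\<And>A B. E (A - B) = E A - E B"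
  shows "absorbs R (E (mpow 0 T))"
proof (rule absorbs_if_mtrace_complement[OF p])
  have hT: "hermitian T" by (rule nonneg_spectrum_hermitian[OF T])
  show "hermitian (E (mpow 0 T))" using hermitian_mpow[OF hT] by (simp add: hermitian_def Ec)
  show "E (mpow 0 T) ** E (mpow 0 T) = E (mpow 0 T)" by (simp add: Em mpow_0_idem[OF hT])
  have "mtrace (R ** (mat 1 - E (mpow 0 T))) = mtrace (T ** (mat 1 - mpow 0 T))"
    by (simp add: tr flip: E1 Ed)
  moreover have "T ** (mat 1 - mpow 0 T) = 0"
    using absorbs_mpow_0[OF T] by (simp add: absorbs_def matrix_diff_ldistrib)
  ultimately show "Re (mtrace (R ** (mat 1 - E (mpow 0 T)))) = 0" by (simp add: mtrace_def)
qed

section \<open>The limit \<alpha> \<rightarrow> 1\<close>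

lemma DeltaAlpha_tendsto:
  assumes R: "nonneg_spectrum R" "mtrace R = 1"
    and X: "(X has_vector_derivative LX) (at 0)" "absorbs R (X 0)"
    and Y: "(Y has_vector_derivative LY) (at 0)" "absorbs R (Y 0)"
    and Z: "(Z has_vector_derivative LZ) (at 0)" "absorbs R (Z 0)"
  shows "((\<lambda>\<alpha>. DeltaAlpha R X Y Z \<alpha>) \<longlongrightarrow>
    Re (mtrace (R ** mlog R)) - Re (mtrace (R ** LX)) - Re (mtrace (R ** LY)) - Re (mtrace (R ** LZ))) (at 1)"
proof -
  obtain K' where K': "(Kop X Y Z has_vector_derivative K') (at 0)"
    and trK': "mtrace (R ** K') = mtrace (R ** LX) + mtrace (R ** LY) + mtrace (R ** LZ)"
    using Kop_has_vector_derivative[OF X Y Z] by blast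
  define K0 where "K0 = Kop X Y Z 0"
  have "absorbs R K0"
    unfolding K0_def Kop_def using X(2) Y(2) Z(2) by (simp add: absorbs_mult)
  then have RK0: "R ** K0 = R" by (simp add: absorbs_def)
  have Rd: "((\<lambda>\<alpha>. mpow \<alpha> R) has_vector_derivative mlog R ** R) (at 1)"
    using mpow_has_vector_derivative[OF nonneg_spectrum_hermitian[OF R(1)], of 1]
    by (simp add: mpow_1[OF R(1)])
  have Kd: "((\<lambda>\<alpha>. Kop X Y Z (1 - \<alpha>)) has_vector_derivative (-1) *\<^sub>R K') (at 1)"
    using has_vector_derivative_affine_comp[of "Kop X Y Z" K' "-1" 1 1] K' by simp
  define H where "H \<alpha> = Re (mtrace (mpow \<alpha> R ** Kop X Y Z (1 - \<alpha>)))" for \<alpha>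
  define D where "D = Re (mtrace (mpow 1 R ** ((-1) *\<^sub>R K') + (mlog R ** R) ** Kop X Y Z (1 - 1)))"
  have "(H has_real_derivative D) (at 1)"
    unfolding H_def D_def has_real_derivative_iff_has_vector_derivative
    by (rule bounded_linear.has_vector_derivative[OF bounded_linear_Re_mtrace
          has_vector_derivative_matrix_mult[OF Rd Kd]])
  moreover have "H 1 = 1" using R by (simp add: H_def mpow_1 RK0 flip: K0_def)
  ultimately have "((\<lambda>\<alpha>. DeltaAlpha R X Y Z \<alpha>) \<longlongrightarrow> D) (at 1)"
    unfolding DeltaAlpha_def H_def[symmetric] by (rule ln_quotient_tendsto)
  moreover have "mtrace ((mlog R ** R) ** K0) = mtrace (R ** mlog R)"
    by (simp add: matrix_mul_assoc[symmetric] RK0) (rule mtrace_mult_commute)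
  then have "D = Re (mtrace (R ** mlog R)) - Re (mtrace (R ** LX)) - Re (mtrace (R ** LY)) - Re (mtrace (R ** LZ))"
    by (simp add: D_def mpow_1[OF R(1)] mtrace_add mtrace_diff matrix_uminus_right mtrace_uminus trK' flip: K0_def)
  ultimately show ?thesis by simp
qed

lemma DeltaAlpha_perm_tendsto:
  assumes R: "nonneg_spectrum R" "mtrace R = 1"
    and A: "(A has_vector_derivative LA) (at 0)" "absorbs R (A 0)"
    and B: "(B has_vector_derivative LB) (at 0)" "absorbs R (B 0)"
    and C: "(C has_vector_derivative LC) (at 0)" "absorbs R (C 0)"
    and v: "v = Re (mtrace (R ** mlog R)) - Re (mtrace (R ** LA)) - Re (mtrace (R ** LB)) - Re (mtrace (R ** LC))"
  shows "\<forall>(X, Y, Z) \<in> perm_triples A B C. ((\<lambda>\<alpha>. DeltaAlpha R X Y Z \<alpha>) \<longlongrightarrow> v) (at 1)"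
proof -
  have lim: "((\<lambda>\<alpha>. DeltaAlpha R X Y Z \<alpha>) \<longlongrightarrow> w) (at 1)"
    if "(X has_vector_derivative LX) (at 0)" "absorbs R (X 0)"
      "(Y has_vector_derivative LY) (at 0)" "absorbs R (Y 0)"
      "(Z has_vector_derivative LZ) (at 0)" "absorbs R (Z 0)"
      "w = Re (mtrace (R ** mlog R)) - Re (mtrace (R ** LX)) - Re (mtrace (R ** LY)) - Re (mtrace (R ** LZ))"
    for X Y Z LX LY LZ w
    using DeltaAlpha_tendsto[OF R that(1-6)] that(7) by simp
  show ?thesis
    unfolding perm_triples_def
    using lim[OF A B C, of v] lim[OF A C B, of v] lim[OF B A C, of v]
      lim[OF B C A, of v] lim[OF C A B, of v] lim[OF C B A, of v]
    by (simp add: v)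
qed

lemma emb_mpow_has_vector_derivative_0:
  assumes "bounded_linear E" and "hermitian T"
  shows "((\<lambda>p. E (mpow p T)) has_vector_derivative E (mlog T)) (at 0)"
  using bounded_linear.has_vector_derivative[OF assms(1) mpow_has_vector_derivative[OF assms(2), of 0]]
  by (simp add: mlog_mult_mpow_0[OF assms(2)])

lemma emb_mpow_uminus_has_vector_derivative_0:
  assumes "bounded_linear E" and "hermitian T"
  shows "((\<lambda>p. E (mpow (- p) T)) has_vector_derivative - E (mlog T)) (at 0)"
  using has_vector_derivative_affine_comp[of "\<lambda>p. E (mpow p T)" "E (mlog T)" "-1" 0 0]
    emb_mpow_has_vector_derivative_0[OF assms] by simp

lemma Delta_eq_mtrace:
  "Delta R T Th W = Re (mtrace (R ** mlog R)) - Re (mtrace (R ** embAC (mlog T)))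
      - Re (mtrace (R ** - embC (mlog W))) - Re (mtrace (R ** embBC (mlog Th)))"
  by (simp add: Delta_def matrix_add_ldistrib matrix_diff_ldistrib mtrace_add mtrace_diff
      matrix_uminus_right mtrace_uminus)

lemma cmi_eq_Delta_marg: "cmi R = Delta R (margAC R) (margBC R) (margC R)"
  by (simp add: cmi_def entropy_def Delta_eq_mtrace mtrace_mult_embAC mtrace_mult_embBC mtrace_mult_embC
      matrix_uminus_right mtrace_uminus)

lemma DeltaAlpha_perm_tendsto_Delta:
  fixes \<rho> :: "complex^('a::finite\<times>'b::finite\<times>'c::finite)^('a\<times>'b\<times>'c)"
    and \<tau> :: "complex^('a\<times>'c)^('a\<times>'c)"
    and \<theta> :: "complex^('b\<times>'c)^('b\<times>'c)"
    and \<omega> :: "complex^'c^'c"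
  assumes \<rho>: "nonneg_spectrum \<rho>" "mtrace \<rho> = 1"
    and nonneg: "nonneg_spectrum \<tau>" "nonneg_spectrum \<theta>" "nonneg_spectrum \<omega>"
    and absorbs: "absorbs \<rho> (embAC (mpow 0 \<tau>))" "absorbs \<rho> (embBC (mpow 0 \<theta>))"
      "absorbs \<rho> (embC (mpow 0 \<omega>))"
  shows "\<forall>(X, Y, Z) \<in> perm_triples (tauF \<tau>) (omegaF \<omega>) (thetaF \<theta>).
            ((\<lambda>\<alpha>. DeltaAlpha \<rho> X Y Z \<alpha>) \<longlongrightarrow> Delta \<rho> \<tau> \<theta> \<omega>) (at 1)"
proof (rule DeltaAlpha_perm_tendsto[OF \<rho>])
  note herm = nonneg_spectrum_hermitian[OF nonneg(1)] nonneg_spectrum_hermitian[OF nonneg(2)]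
    nonneg_spectrum_hermitian[OF nonneg(3)]
  show "(tauF \<tau> has_vector_derivative embAC (mlog \<tau>)) (at 0)"
    unfolding tauF_def[abs_def] by (rule emb_mpow_has_vector_derivative_0[OF bounded_linear_emb(1) herm(1)])
  show "(omegaF \<omega> has_vector_derivative - embC (mlog \<omega>)) (at 0)"
    unfolding omegaF_def[abs_def] by (rule emb_mpow_uminus_has_vector_derivative_0[OF bounded_linear_emb(3) herm(3)])
  show "(thetaF \<theta> has_vector_derivative embBC (mlog \<theta>)) (at 0)"
    unfolding thetaF_def[abs_def] by (rule emb_mpow_has_vector_derivative_0[OF bounded_linear_emb(2) herm(2)])
qed (use absorbs in \<open>simp_all add: tauF_def omegaF_def thetaF_def Delta_eq_mtrace\<close>)

lemma DeltaAlpha_perm_tendsto_cmi: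
  fixes \<rho> :: "complex^('a::finite\<times>'b::finite\<times>'c::finite)^('a\<times>'b\<times>'c)"
  assumes p: "psd \<rho>" and tr: "mtrace \<rho> = 1"
  shows "\<forall>(X, Y, Z) \<in> perm_triples (tauF (margAC \<rho>)) (omegaF (margC \<rho>)) (thetaF (margBC \<rho>)).
            ((\<lambda>\<alpha>. DeltaAlpha \<rho> X Y Z \<alpha>) \<longlongrightarrow> cmi \<rho>) (at 1)"
proof -
  have h: "hermitian \<rho>" using p by (simp add: psd_def)
  have AC: "nonneg_spectrum (margAC \<rho>)"
    by (rule nonneg_spectrum_if_mtrace_dual[OF p hermitian_marg(1)[OF h] mtrace_mult_embAC embAC_mult cadj_emb(1)])
  have BC: "nonneg_spectrum (margBC \<rho>)"
    by (rule nonneg_spectrum_if_mtrace_dual[OF p hermitian_marg(2)[OF h] mtrace_mult_embBC embBC_mult cadj_emb(2)])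
  have C: "nonneg_spectrum (margC \<rho>)"
    by (rule nonneg_spectrum_if_mtrace_dual[OF p hermitian_marg(3)[OF h] mtrace_mult_embC embC_mult cadj_emb(3)])
  show ?thesis unfolding cmi_eq_Delta_marg
  proof (rule DeltaAlpha_perm_tendsto_Delta[OF psd_imp_nonneg_spectrum[OF p] tr AC BC C])
    show "absorbs \<rho> (embAC (mpow 0 (margAC \<rho>)))"
      by (rule absorbs_mpow_0_if_mtrace_dual[OF p AC mtrace_mult_embAC embAC_mult cadj_emb(1) emb_mat_1(1) emb_diff(1)])
    show "absorbs \<rho> (embBC (mpow 0 (margBC \<rho>)))"
      by (rule absorbs_mpow_0_if_mtrace_dual[OF p BC mtrace_mult_embBC embBC_mult cadj_emb(2) emb_mat_1(2) emb_diff(2)])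
    show "absorbs \<rho> (embC (mpow 0 (margC \<rho>)))"
      by (rule absorbs_mpow_0_if_mtrace_dual[OF p C mtrace_mult_embC embC_mult cadj_emb(3) emb_mat_1(3) emb_diff(3)])
  qed
qed

theorem mainTheorem7:
  fixes \<rho> :: "complex^('a::finite\<times>'b::finite\<times>'c::finite)^('a\<times>'b\<times>'c)"
    and \<tau> :: "complex^('a\<times>'c)^('a\<times>'c)"
    and \<theta> :: "complex^('b\<times>'c)^('b\<times>'c)"
    and \<omega> :: "complex^'c^'c"
  assumes "density \<rho>" and "density \<tau>" and "density \<theta>" and "density \<omega>"
    and "supp \<rho> \<subseteq> supp (embAC \<tau> :: complex^('a\<times>'b\<times>'c)^('a\<times>'b\<times>'c))
                   \<inter> supp (embBC \<theta> :: complex^('a\<times>'b\<times>'c)^('a\<times>'b\<times>'c))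
                   \<inter> supp (embC \<omega> :: complex^('a\<times>'b\<times>'c)^('a\<times>'b\<times>'c))"
  shows "(\<forall>(X, Y, Z) \<in> perm_triples (tauF \<tau>) (omegaF \<omega>) (thetaF \<theta>).
            ((\<lambda>\<alpha>. DeltaAlpha \<rho> X Y Z \<alpha>) \<longlongrightarrow> Delta \<rho> \<tau> \<theta> \<omega>) (at 1))
       \<and> (\<forall>(X, Y, Z) \<in> perm_triples (tauF (margAC \<rho>)) (omegaF (margC \<rho>)) (thetaF (margBC \<rho>)).
            ((\<lambda>\<alpha>. DeltaAlpha \<rho> X Y Z \<alpha>) \<longlongrightarrow> cmi \<rho>) (at 1))"
proof -
  have p: "psd \<rho>" and tr: "mtrace \<rho> = 1" using assms(1) by (simp_all add: density_def)
  then have h: "hermitian \<rho>" by (simp add: psd_def)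
  have \<tau>: "nonneg_spectrum \<tau>" and \<theta>: "nonneg_spectrum \<theta>" and \<omega>: "nonneg_spectrum \<omega>"
    using assms(2-4) by (simp_all add: density_def psd_imp_nonneg_spectrum)
  have "absorbs \<rho> (embAC (mpow 0 \<tau>))"
    by (rule absorbs_mpow_0_if_supp_subset[OF h \<tau> embAC_mult cadj_emb(1)]) (use assms(5) in blast)
  moreover have "absorbs \<rho> (embBC (mpow 0 \<theta>))"
    by (rule absorbs_mpow_0_if_supp_subset[OF h \<theta> embBC_mult cadj_emb(2)]) (use assms(5) in blast)
  moreover have "absorbs \<rho> (embC (mpow 0 \<omega>))"
    by (rule absorbs_mpow_0_if_supp_subset[OF h \<omega> embC_mult cadj_emb(3)]) (use assms(5) in blast)
  ultimately show ?thesis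
    using DeltaAlpha_perm_tendsto_Delta[OF psd_imp_nonneg_spectrum[OF p] tr \<tau> \<theta> \<omega>]
      DeltaAlpha_perm_tendsto_cmi[OF p tr] by blast
qed

end
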